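(* Let $k,l$ be positive integers and $q\in\mathbb{C}$ with $|q|<1$. Then $$\sum q^{\lambda_1+\cdots+\lambda_l+\lambda_{l+1}}=\prod_{j=1}^{l+1}\frac{1}{1-q^{jk}}\cdot\frac{1-q+q^{lk+1}-q^{k(l+1)}}{1-q},$$ where the sum is over all integer tuples $(\lambda_1,\dots,\lambda_{l+1})$ with $\lambda_1\ge\lambda_2\ge\cdots\ge\lambda_{l+1}\ge0$ and $k\mid\lambda_j$ for $1\le j\le l$. *)

theory Defs
  imports "HOL-Analysis.Analysis"
begin

end

theory Submission
  imports Defs
begin

(* Write the largest part as \<lambda>\<^sub>1 = \<lambda>\<^sub>2 + k t. Summing over t gives a geometric series in a
   power of q\<^sup>k, and what remains is the same sum over one part fewer, except that \<lambda>\<^sub>2 takes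
   over the weight of \<lambda>\<^sub>1. So one proves, by induction on the number of parts, a closed form
   for the sum of q ^ (|\<lambda>| + c \<lambda>\<^sub>1) with an extra weight c. The base case, two parts k a \<ge> r,
   is a difference of two geometric series. All sums converge absolutely, which justifies
   summing the iterated series. *)

lemma has_sum_geometric:
  fixes z :: "'a::{real_normed_field,banach}"
  assumes "norm z < 1"
  shows "((\<lambda>n. z ^ n) has_sum (1 / (1 - z))) UNIV"
  by (rule norm_summable_imp_has_sum)
     (use assms in \<open>auto simp: norm_power intro: summable_geometric geometric_sums\<close>)

lemma has_sum_Sigma_abs:
  fixes f :: "'x \<times> 'y \<Rightarrow> 'c::banach"
  assumes inner: "\<And>x. x \<in> A \<Longrightarrow> ((\<lambda>y. f (x, y)) has_sum g x) (B x)"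
    and inner_norm: "\<And>x. x \<in> A \<Longrightarrow> ((\<lambda>y. norm (f (x, y))) has_sum G x) (B x)"
    and outer: "(g has_sum S) A" and outer_norm: "G summable_on A"
  shows "(f has_sum S) (Sigma A B)" and "(\<lambda>p. norm (f p)) summable_on Sigma A B"
proof -
  show norm_summable: "(\<lambda>p. norm (f p)) summable_on Sigma A B"
    by (rule summable_on_SigmaI[OF inner_norm outer_norm]) auto
  show "(f has_sum S) (Sigma A B)"
    by (rule has_sum_SigmaI[OF inner outer abs_summable_summable[OF norm_summable]])
qed

definition pair_sum :: "'a::field \<Rightarrow> nat \<Rightarrow> nat \<Rightarrow> 'a" where
  "pair_sum q k m = (1 / (1 - q ^ (m * k)) - q / (1 - q ^ ((m + 1) * k))) / (1 - q)"

lemma has_sum_pair_sum: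
  fixes q :: "'a::{real_normed_field,banach}"
  assumes "norm q < 1" and "k > 0" and "m > 0"
  shows "((\<lambda>a. \<Sum>r\<le>k * a. q ^ (m * k * a + r)) has_sum pair_sum q k m) UNIV"
proof -
  have "q \<noteq> 1" using assms by auto
  have norm_less: "norm (q ^ (m * k)) < 1" "norm (q ^ ((m + 1) * k)) < 1"
    using assms by (auto simp: norm_power power_less_one_iff)
  have finite_sum: "(\<Sum>r\<le>k * a. q ^ (m * k * a + r))
      = ((q ^ (m * k)) ^ a - q * (q ^ ((m + 1) * k)) ^ a) / (1 - q)" for a
  proof -
    have "(\<Sum>r\<le>k * a. q ^ (m * k * a + r)) = q ^ (m * k * a) * (\<Sum>r<k * a + 1. q ^ r)"
      by (simp add: sum_distrib_left power_add lessThan_Suc_atMost)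
    also have "\<dots> = q ^ (m * k * a) * ((1 - q ^ (k * a + 1)) / (1 - q))"
      using \<open>q \<noteq> 1\<close> by (subst sum_gp_strict) simp
    also have "\<dots> = ((q ^ (m * k)) ^ a - q * (q ^ ((m + 1) * k)) ^ a) / (1 - q)"
      by (simp add: field_simps power_add power_mult[symmetric] algebra_simps)
    finally show ?thesis .
  qed
  have "((\<lambda>a. (q ^ (m * k)) ^ a + (- q) * (q ^ ((m + 1) * k)) ^ a) has_sum
          (1 / (1 - q ^ (m * k)) + (- q) * (1 / (1 - q ^ ((m + 1) * k))))) UNIV"
    by (intro has_sum_add has_sum_cmult_right has_sum_geometric norm_less)
  then have "((\<lambda>a. ((q ^ (m * k)) ^ a + (- q) * (q ^ ((m + 1) * k)) ^ a) / (1 - q)) has_sum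
          (1 / (1 - q ^ (m * k)) + (- q) * (1 / (1 - q ^ ((m + 1) * k)))) / (1 - q)) UNIV"
    by (rule has_sum_divide_const)
  then show ?thesis
    by (simp add: finite_sum pair_sum_def)
qed

lemma pair_sum_eq:
  fixes q :: "'a::field"
  assumes "q ^ (m * k) \<noteq> 1" and "q ^ ((m + 1) * k) \<noteq> 1"
  shows "pair_sum q k m = 1 / (1 - q ^ (m * k)) * (1 / (1 - q ^ ((m + 1) * k))) *
           ((1 - q + q ^ (m * k + 1) - q ^ (k * (m + 1))) / (1 - q))"
proof -
  have "q \<noteq> 1" using assms(1) by auto
  then show ?thesis
    using assms by (simp add: pair_sum_def field_simps power_add mult.commute)
qed

definition dvd_decr_lists :: "nat \<Rightarrow> nat \<Rightarrow> nat list set" where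
  "dvd_decr_lists k n = {xs. length xs = n + 1 \<and> sorted_wrt (\<ge>) xs \<and> (\<forall>j<n. k dvd xs ! j)}"

lemma dvd_decr_lists_dvd_hd:
  assumes "ys \<in> dvd_decr_lists k n" and "n > 0"
  shows "k dvd hd ys"
proof -
  have "ys \<noteq> []" and "k dvd ys ! 0"
    using assms by (auto simp: dvd_decr_lists_def)
  then show ?thesis by (simp add: hd_conv_nth)
qed

lemma Cons_in_dvd_decr_lists_iff:
  assumes "n > 0"
  shows "x # ys \<in> dvd_decr_lists k (Suc n) \<longleftrightarrow>
           ys \<in> dvd_decr_lists k n \<and> hd ys \<le> x \<and> k dvd x"
proof (cases ys)
  case (Cons y zs)
  have "(\<forall>j<Suc n. k dvd (x # ys) ! j) \<longleftrightarrow> k dvd x \<and> (\<forall>j<n. k dvd ys ! j)"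
    by (auto simp: less_Suc_eq_0_disj)
  then show ?thesis
    using Cons by (auto simp: dvd_decr_lists_def)
qed (use assms in \<open>auto simp: dvd_decr_lists_def\<close>)

lemma dvd_decr_lists_one_eq_image:
  "dvd_decr_lists k 1 = (\<lambda>(a, r). [k * a, r]) ` (SIGMA a:UNIV. {..k * a})"
  by (auto simp: dvd_decr_lists_def numeral_2_eq_2 length_Suc_conv image_iff elim!: dvdE)

lemma dvd_decr_lists_Suc_eq_image:
  assumes "n > 0"
  shows "dvd_decr_lists k (Suc n) = (\<lambda>(ys, t). (hd ys + k * t) # ys) ` (dvd_decr_lists k n \<times> UNIV)"
proof (intro equalityI subsetI)
  fix xs assume xs: "xs \<in> dvd_decr_lists k (Suc n)"
  then obtain x ys where xs_eq: "xs = x # ys"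
    by (cases xs) (auto simp: dvd_decr_lists_def)
  with xs assms have ys: "ys \<in> dvd_decr_lists k n" and "hd ys \<le> x" and "k dvd x"
    by (simp_all add: Cons_in_dvd_decr_lists_iff)
  moreover have "k dvd hd ys"
    using ys assms by (rule dvd_decr_lists_dvd_hd)
  ultimately obtain t where "x = hd ys + k * t"
    by (metis dvd_diff_nat dvdE le_add_diff_inverse)
  with xs_eq ys show "xs \<in> (\<lambda>(ys, t). (hd ys + k * t) # ys) ` (dvd_decr_lists k n \<times> UNIV)"
    by force
next
  fix xs assume "xs \<in> (\<lambda>(ys, t). (hd ys + k * t) # ys) ` (dvd_decr_lists k n \<times> UNIV)"
  then show "xs \<in> dvd_decr_lists k (Suc n)"
    using assms dvd_decr_lists_dvd_hd by (auto simp: Cons_in_dvd_decr_lists_iff)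
qed

lemma bij_betw_pairs_dvd_decr_lists:
  assumes "k > 0"
  shows "bij_betw (\<lambda>(a, r). [k * a, r]) (SIGMA a:UNIV. {..k * a}) (dvd_decr_lists k 1)"
  unfolding bij_betw_def dvd_decr_lists_one_eq_image using assms by (auto simp: inj_on_def)

lemma bij_betw_Cons_dvd_decr_lists:
  assumes "k > 0" and "n > 0"
  shows "bij_betw (\<lambda>(ys, t). (hd ys + k * t) # ys)
           (dvd_decr_lists k n \<times> UNIV) (dvd_decr_lists k (Suc n))"
  unfolding bij_betw_def dvd_decr_lists_Suc_eq_image[OF assms(2)] using assms(1)
  by (auto simp: inj_on_def)

lemma has_sum_dvd_decr_lists_one:
  fixes q :: "'a::{real_normed_field,banach}"
  assumes "norm q < 1" and "k > 0"
  shows "((\<lambda>xs. q ^ (sum_list xs + c * hd xs)) has_sum pair_sum q k (Suc c)) (dvd_decr_lists k 1)"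
    and "(\<lambda>xs. norm (q ^ (sum_list xs + c * hd xs))) summable_on dvd_decr_lists k 1"
proof -
  define f where "f = (\<lambda>(a, r). q ^ (Suc c * k * a + r))"
  have inner: "((\<lambda>r. f (a, r)) has_sum (\<Sum>r\<le>k * a. q ^ (Suc c * k * a + r))) {..k * a}" for a
    by (simp add: f_def has_sum_finite)
  have inner_norm: "((\<lambda>r. norm (f (a, r))) has_sum (\<Sum>r\<le>k * a. norm q ^ (Suc c * k * a + r))) {..k * a}"
    for a by (simp add: f_def has_sum_finite norm_power)
  have outer: "((\<lambda>a. \<Sum>r\<le>k * a. q ^ (Suc c * k * a + r)) has_sum pair_sum q k (Suc c)) UNIV"
    using assms by (intro has_sum_pair_sum) auto
  have outer_norm: "(\<lambda>a. \<Sum>r\<le>k * a. norm q ^ (Suc c * k * a + r)) summable_on UNIV"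
    using has_sum_pair_sum[of "norm q" k "Suc c"] assms by (auto dest: has_sum_imp_summable)
  have f_eq: "f = (\<lambda>p. q ^ (sum_list ((\<lambda>(a, r). [k * a, r]) p) + c * hd ((\<lambda>(a, r). [k * a, r]) p)))"
    by (auto simp: f_def algebra_simps)
  note bij = bij_betw_pairs_dvd_decr_lists[OF assms(2)]
  show "((\<lambda>xs. q ^ (sum_list xs + c * hd xs)) has_sum pair_sum q k (Suc c)) (dvd_decr_lists k 1)"
    using has_sum_Sigma_abs(1)[OF inner inner_norm outer outer_norm]
    unfolding f_eq has_sum_reindex_bij_betw[OF bij, symmetric] .
  show "(\<lambda>xs. norm (q ^ (sum_list xs + c * hd xs))) summable_on dvd_decr_lists k 1"
    using has_sum_Sigma_abs(2)[OF inner inner_norm outer outer_norm]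
    unfolding f_eq summable_on_reindex_bij_betw[OF bij, symmetric] .
qed

lemma has_sum_dvd_decr_lists_Suc:
  fixes q :: "'a::{real_normed_field,banach}"
  assumes "norm q < 1" and "k > 0" and "n > 0"
    and sum: "((\<lambda>ys. q ^ (sum_list ys + Suc c * hd ys)) has_sum S) (dvd_decr_lists k n)"
    and norm_summable: "(\<lambda>ys. norm (q ^ (sum_list ys + Suc c * hd ys))) summable_on dvd_decr_lists k n"
  shows "((\<lambda>xs. q ^ (sum_list xs + c * hd xs)) has_sum S / (1 - q ^ (Suc c * k)))
           (dvd_decr_lists k (Suc n))"
    and "(\<lambda>xs. norm (q ^ (sum_list xs + c * hd xs))) summable_on dvd_decr_lists k (Suc n)"
proof -
  define w where "w = (\<lambda>ys. sum_list ys + Suc c * hd ys)"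
  define f where "f = (\<lambda>(ys, t). q ^ w ys * (q ^ (Suc c * k)) ^ t)"
  have less_one: "norm (q ^ (Suc c * k)) < 1" "norm (norm q ^ (Suc c * k)) < 1"
    using assms by (auto simp: norm_power power_less_one_iff)
  have inner: "((\<lambda>t. f (ys, t)) has_sum q ^ w ys / (1 - q ^ (Suc c * k))) UNIV" for ys
    using has_sum_cmult_right[OF has_sum_geometric[OF less_one(1)], of "q ^ w ys"]
    by (simp add: f_def)
  have inner_norm: "((\<lambda>t. norm (f (ys, t))) has_sum
                       norm (q ^ w ys) / (1 - norm q ^ (Suc c * k))) UNIV" for ys
    using has_sum_cmult_right[OF has_sum_geometric[OF less_one(2)], of "norm (q ^ w ys)"]
    by (simp add: f_def norm_mult norm_power)
  have outer: "((\<lambda>ys. q ^ w ys / (1 - q ^ (Suc c * k))) has_sum S / (1 - q ^ (Suc c * k)))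
                 (dvd_decr_lists k n)"
    using sum unfolding w_def by (rule has_sum_divide_const)
  have outer_norm: "(\<lambda>ys. norm (q ^ w ys) / (1 - norm q ^ (Suc c * k))) summable_on dvd_decr_lists k n"
    using summable_on_cmult_left[OF norm_summable, of "inverse (1 - norm q ^ (Suc c * k))"]
    by (simp add: w_def divide_inverse)
  have f_eq: "f = (\<lambda>p. q ^ (sum_list ((\<lambda>(ys, t). (hd ys + k * t) # ys) p)
                    + c * hd ((\<lambda>(ys, t). (hd ys + k * t) # ys) p)))"
  proof -
    have "f (ys, t) = q ^ (sum_list ((hd ys + k * t) # ys) + c * hd ((hd ys + k * t) # ys))" for ys t
    proof -
      have "sum_list ((hd ys + k * t) # ys) + c * hd ((hd ys + k * t) # ys) = w ys + Suc c * k * t"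
        by (simp add: w_def algebra_simps)
      then show ?thesis
        by (simp only: f_def prod.case power_add power_mult)
    qed
    then show ?thesis
      by (simp add: fun_eq_iff split: prod.split)
  qed
  note bij = bij_betw_Cons_dvd_decr_lists[OF assms(2,3)]
  show "((\<lambda>xs. q ^ (sum_list xs + c * hd xs)) has_sum S / (1 - q ^ (Suc c * k)))
          (dvd_decr_lists k (Suc n))"
    using has_sum_Sigma_abs(1)[OF inner inner_norm outer outer_norm]
    unfolding f_eq has_sum_reindex_bij_betw[OF bij, symmetric] .
  show "(\<lambda>xs. norm (q ^ (sum_list xs + c * hd xs))) summable_on dvd_decr_lists k (Suc n)"
    using has_sum_Sigma_abs(2)[OF inner inner_norm outer outer_norm]
    unfolding f_eq summable_on_reindex_bij_betw[OF bij, symmetric] .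
qed

lemma has_sum_dvd_decr_lists_weighted:
  fixes q :: "'a::{real_normed_field,banach}"
  assumes "norm q < 1" and "k > 0" and "n > 0"
  shows "((\<lambda>xs. q ^ (sum_list xs + c * hd xs)) has_sum
            (\<Prod>j = Suc c..<c + n. 1 / (1 - q ^ (j * k))) * pair_sum q k (c + n))
           (dvd_decr_lists k n) \<and>
         (\<lambda>xs. norm (q ^ (sum_list xs + c * hd xs))) summable_on dvd_decr_lists k n"
  using assms(3)
proof (induction n arbitrary: c rule: nat_induct_non_zero)
  case 1
  then show ?case
    using has_sum_dvd_decr_lists_one[OF assms(1,2)] by simp
next
  case (Suc n)
  have "(\<Prod>j = Suc c..<c + Suc n. 1 / (1 - q ^ (j * k)))
        = 1 / (1 - q ^ (Suc c * k)) * (\<Prod>j = Suc (Suc c)..<Suc c + n. 1 / (1 - q ^ (j * k)))"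
    using \<open>n > 0\<close> by (subst prod.atLeast_Suc_lessThan) auto
  then have value_eq: "(\<Prod>j = Suc (Suc c)..<Suc c + n. 1 / (1 - q ^ (j * k))) * pair_sum q k (Suc c + n)
          / (1 - q ^ (Suc c * k))
        = (\<Prod>j = Suc c..<c + Suc n. 1 / (1 - q ^ (j * k))) * pair_sum q k (c + Suc n)"
    by simp
  from Suc.IH[of "Suc c"]
  show ?case
    using has_sum_dvd_decr_lists_Suc[OF assms(1,2) \<open>n > 0\<close>] unfolding value_eq[symmetric] by blast
qed

theorem lemma11:
  fixes k l :: nat and q :: complex
  assumes "k > 0" and "l > 0" and "norm q < 1"
  shows "((\<lambda>xs. q ^ sum_list xs) has_sum
           ((\<Prod>j=1..l+1. 1 / (1 - q ^ (j*k))) *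
            ((1 - q + q ^ (l*k+1) - q ^ (k*(l+1))) / (1 - q))))
         {xs :: nat list. length xs = l + 1 \<and> sorted_wrt (\<ge>) xs \<and>
                          (\<forall>j<l. k dvd xs ! j)}"
proof -
  have "norm (q ^ (l * k)) < 1" and "norm (q ^ ((l + 1) * k)) < 1"
    using assms by (simp_all add: norm_power power_less_one_iff)
  then have pair_sum_l: "pair_sum q k l = 1 / (1 - q ^ (l * k)) * (1 / (1 - q ^ ((l + 1) * k))) *
           ((1 - q + q ^ (l * k + 1) - q ^ (k * (l + 1))) / (1 - q))"
    by (intro pair_sum_eq) auto
  have prod_split: "(\<Prod>j = 1..l+1. 1 / (1 - q ^ (j * k))) = (\<Prod>j = 1..<l. 1 / (1 - q ^ (j * k))) *
      (1 / (1 - q ^ (l * k))) * (1 / (1 - q ^ ((l + 1) * k)))"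
    using assms(2) by (simp add: atLeastLessThanSuc_atLeastAtMost[symmetric] prod.atLeastLessThan_Suc)
  have "((\<lambda>xs. q ^ sum_list xs) has_sum
          (\<Prod>j = 1..<l. 1 / (1 - q ^ (j * k))) * pair_sum q k l) (dvd_decr_lists k l)"
    using has_sum_dvd_decr_lists_weighted[OF assms(3,1,2), of 0] by simp
  then show ?thesis
    unfolding prod_split pair_sum_l dvd_decr_lists_def by (simp only: mult.assoc)
qed

end
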